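(* Let ${\cal X}$ be finite, $T$ an irreducible transition matrix on ${\cal X}$ reversible with respect to $\pi$ (i.e. $\pi(x)T(x,y)=\pi(y)T(y,x)$), and $\ddot{\cal X}=\{(x,y):T(x,y)>0\}$. Let $U$ and $U'$ be two families of probability distributions $U_x(y,\cdot)$, $U'_x(y,\cdot)$ on ${\cal X}$ (for $x,y\in{\cal X}$), each satisfying $T(x,y)\,U_x(y,z)=T(x,z)\,U_x(z,y)$ (resp. with $U'$) for all $x,y,z$ with $y\ne z$, and such that $U'_x(y,z)\ge U_x(y,z)$ for all $x,y,z\in{\cal X}$ with $y\neq z$. Define Markov chains on $\ddot{\cal X}$ with transition probabilities $\ddot T((x_0,x_1),(y_0,y_1))=\delta(x_1,y_0)U_{x_1}(x_0,y_1)$ and $\ddot T'((x_0,x_1),(y_0,y_1))=\delta(x_1,y_0)U'_{x_1}(x_0,y_1)$, and assume both are irreducible. For $f:{\cal X}\to\mathbb{R}$, let $\hat\mu_n$ and $\hat\mu'_n$ be the averages of $f$ applied to the second component of the first $n$ states of the $\ddot T$-chain and the $\ddot T'$-chain respectively. Then $\lim_{n\to\infty}n\,\mathrm{Var}(\hat\mu'_n)\le\lim_{n\to\infty}n\,\mathrm{Var}(\hat\mu_n)$.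
   Context: $\delta(a,b)=1$ if $a=b$ and $0$ otherwise. Both chains leave invariant $\ddot\pi(x,y)=\pi(x)T(x,y)$, whose second-component marginal is $\pi$. *)

theory Defs
  imports "HOL-Analysis.Analysis"
begin

text \<open>Finite Markov kernels are represented as functions P :: 'b => 'b => real,
restricted to a finite state set S.\<close>

definition stochastic_on :: "'b set \<Rightarrow> ('b \<Rightarrow> 'b \<Rightarrow> real) \<Rightarrow> bool" where
  "stochastic_on S P \<longleftrightarrow> (\<forall>a\<in>S. \<forall>b\<in>S. 0 \<le> P a b) \<and> (\<forall>a\<in>S. (\<Sum>b\<in>S. P a b) = 1)"

fun mpow :: "'b set \<Rightarrow> ('b \<Rightarrow> 'b \<Rightarrow> real) \<Rightarrow> nat \<Rightarrow> 'b \<Rightarrow> 'b \<Rightarrow> real" where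
  "mpow S P 0 a b = (if a = b then 1 else 0)"
| "mpow S P (Suc n) a b = (\<Sum>c\<in>S. mpow S P n a c * P c b)"

definition irreducible_on :: "'b set \<Rightarrow> ('b \<Rightarrow> 'b \<Rightarrow> real) \<Rightarrow> bool" where
  "irreducible_on S P \<longleftrightarrow> (\<forall>a\<in>S. \<forall>b\<in>S. \<exists>n. mpow S P n a b > 0)"

definition dist_at :: "'b set \<Rightarrow> ('b \<Rightarrow> 'b \<Rightarrow> real) \<Rightarrow> ('b \<Rightarrow> real) \<Rightarrow> nat \<Rightarrow> 'b \<Rightarrow> real" where
  "dist_at S P mu i b = (\<Sum>a\<in>S. mu a * mpow S P i a b)"

definition chain_mean :: "'b set \<Rightarrow> ('b \<Rightarrow> 'b \<Rightarrow> real) \<Rightarrow> ('b \<Rightarrow> real) \<Rightarrow> ('b \<Rightarrow> real) \<Rightarrow> nat \<Rightarrow> real" where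
  "chain_mean S P mu g i = (\<Sum>a\<in>S. dist_at S P mu i a * g a)"

text \<open>E[g(X_i) g(X_j)] (Markov property, i and j in either order)\<close>
definition chain_moment2 :: "'b set \<Rightarrow> ('b \<Rightarrow> 'b \<Rightarrow> real) \<Rightarrow> ('b \<Rightarrow> real) \<Rightarrow> ('b \<Rightarrow> real) \<Rightarrow> nat \<Rightarrow> nat \<Rightarrow> real" where
  "chain_moment2 S P mu g i j =
     (\<Sum>a\<in>S. dist_at S P mu (min i j) a * g a *
        (\<Sum>b\<in>S. mpow S P (max i j - min i j) a b * g b))"

definition var_avg :: "'b set \<Rightarrow> ('b \<Rightarrow> 'b \<Rightarrow> real) \<Rightarrow> ('b \<Rightarrow> real) \<Rightarrow> ('b \<Rightarrow> real) \<Rightarrow> nat \<Rightarrow> real" where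
  "var_avg S P mu g n =
     (\<Sum>i<n. \<Sum>j<n. chain_moment2 S P mu g i j) / (real n)^2
     - ((\<Sum>i<n. chain_mean S P mu g i) / real n)^2"

text \<open>Lifted kernel: Tdd((x0,x1),(y0,y1)) = delta(x1,y0) U_{x1}(x0,y1),
  with U x y z standing for U_x(y,z).\<close>
definition lift_kernel :: "('a \<Rightarrow> 'a \<Rightarrow> 'a \<Rightarrow> real) \<Rightarrow> 'a \<times> 'a \<Rightarrow> 'a \<times> 'a \<Rightarrow> real" where
  "lift_kernel U p q = (if snd p = fst q then U (snd p) (fst p) (snd q) else 0)"

end

theory Submission
  imports Defs
begin

(* The lifted chain on pairs is not reversible, but it is reversible up to the involution
   J (x, y) = (y, x): with mu (x, y) = pi x * T x y one has mu p * P p q = mu (J q) * P (J q) (J p).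

   For a stationary irreducible chain, n Var(avg_n) tends to 2 <g, h> - <g, g>, where g is the
   centred observable f o snd and h solves the Poisson equation (I - P) h = g.  Since g = g_prev o J
   for the centred g_prev = f o fst, and P g_prev = g, the kernel-dependent part of <g, h> is <s, k>
   with s = (g_prev + g) / 2 invariant under J and (I - P) k = s.

   The twisted form Q_P y = <y o J, (I - P) y> is nonnegative on J-even and nonpositive on J-odd
   functions, and U <= U' off the diagonal gives Q_P <= Q_P', a Peskun-type comparison.  A
   variational argument combining these facts yields <s, k'> <= <s, k>. *)

definition markov_op :: "'b set \<Rightarrow> ('b \<Rightarrow> 'b \<Rightarrow> real) \<Rightarrow> ('b \<Rightarrow> real) \<Rightarrow> 'b \<Rightarrow> real" where
  "markov_op S P v p = (\<Sum>q\<in>S. P p q * v q)"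

definition inner_on :: "'b set \<Rightarrow> ('b \<Rightarrow> real) \<Rightarrow> ('b \<Rightarrow> real) \<Rightarrow> ('b \<Rightarrow> real) \<Rightarrow> real" where
  "inner_on S mu u v = (\<Sum>p\<in>S. mu p * u p * v p)"

definition twisted_form ::
    "'b set \<Rightarrow> ('b \<Rightarrow> real) \<Rightarrow> ('b \<Rightarrow> 'b \<Rightarrow> real) \<Rightarrow> ('b \<Rightarrow> 'b) \<Rightarrow> ('b \<Rightarrow> real) \<Rightarrow> real" where
  "twisted_form S mu P J y = inner_on S mu (\<lambda>p. y (J p)) (\<lambda>p. y p - markov_op S P y p)"

lemma markov_op_cong: "(\<And>q. q \<in> S \<Longrightarrow> v q = w q) \<Longrightarrow> markov_op S P v p = markov_op S P w p"
  unfolding markov_op_def by (auto intro: sum.cong)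

lemma markov_op_add: "markov_op S P (\<lambda>q. u q + v q) p = markov_op S P u p + markov_op S P v p"
  unfolding markov_op_def by (simp add: algebra_simps sum.distrib)

lemma markov_op_diff: "markov_op S P (\<lambda>q. u q - v q) = (\<lambda>p. markov_op S P u p - markov_op S P v p)"
  unfolding markov_op_def by (simp add: fun_eq_iff algebra_simps sum_subtractf)

lemma poisson_shift_half:
  assumes "\<And>p. p \<in> S \<Longrightarrow> markov_op S P g_prev p = g p"
    and "\<And>p. p \<in> S \<Longrightarrow> h p - markov_op S P h p = g p" and "p \<in> S"
  shows "h p + g_prev p / 2 - markov_op S P (\<lambda>q. h q + g_prev q / 2) p = (g_prev p + g p) / 2"
proof -
  have "markov_op S P (\<lambda>q. h q + g_prev q / 2) p = markov_op S P h p + markov_op S P g_prev p / 2"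
    unfolding markov_op_def by (simp add: algebra_simps sum.distrib sum_divide_distrib)
  then show ?thesis using assms(1)[OF assms(3)] assms(2)[OF assms(3)] by simp
qed

lemma funpow_markov_op_diff:
  "(markov_op S P ^^ n) (\<lambda>q. u q - v q) = (\<lambda>p. (markov_op S P ^^ n) u p - (markov_op S P ^^ n) v p)"
  by (induction n) (simp_all add: markov_op_diff)

lemma funpow_markov_op_cong:
  "(\<And>q. q \<in> S \<Longrightarrow> v q = w q) \<Longrightarrow> p \<in> S \<Longrightarrow> (markov_op S P ^^ n) v p = (markov_op S P ^^ n) w p"
  by (induction n arbitrary: p) (auto intro: markov_op_cong)

lemma inner_on_cong:
  "(\<And>p. p \<in> S \<Longrightarrow> u p = u' p) \<Longrightarrow> (\<And>p. p \<in> S \<Longrightarrow> v p = v' p) \<Longrightarrow> inner_on S mu u v = inner_on S mu u' v'"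
  unfolding inner_on_def by (auto intro: sum.cong)

lemma inner_on_commute: "inner_on S mu u v = inner_on S mu v u"
  unfolding inner_on_def by (simp add: ac_simps)

lemma inner_on_add_left: "inner_on S mu (\<lambda>p. u p + v p) w = inner_on S mu u w + inner_on S mu v w"
  unfolding inner_on_def by (simp add: algebra_simps sum.distrib)

lemma inner_on_add_right: "inner_on S mu w (\<lambda>p. u p + v p) = inner_on S mu w u + inner_on S mu w v"
  unfolding inner_on_def by (simp add: algebra_simps sum.distrib)

lemma inner_on_diff_right: "inner_on S mu w (\<lambda>p. u p - v p) = inner_on S mu w u - inner_on S mu w v"
  unfolding inner_on_def by (simp add: algebra_simps sum_subtractf)

lemma inner_on_diff_left: "inner_on S mu (\<lambda>p. u p - v p) w = inner_on S mu u w - inner_on S mu v w"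
  unfolding inner_on_def by (simp add: algebra_simps sum_subtractf)

lemma inner_on_scale_left: "inner_on S mu (\<lambda>p. c * u p) w = c * inner_on S mu u w"
  unfolding inner_on_def by (simp add: algebra_simps sum_distrib_left)

lemma inner_on_const_right: "inner_on S mu g (\<lambda>_. c) = c * (\<Sum>p\<in>S. mu p * g p)"
  unfolding inner_on_def by (simp add: sum_distrib_left ac_simps)

lemma inner_on_const_left: "inner_on S mu (\<lambda>_. c) g = c * (\<Sum>p\<in>S. mu p * g p)"
  unfolding inner_on_def by (simp add: sum_distrib_left ac_simps)

lemma inner_on_sum_right:
  "finite K \<Longrightarrow> inner_on S mu w (\<lambda>p. \<Sum>k\<in>K. f k p) = (\<Sum>k\<in>K. inner_on S mu w (f k))"
  unfolding inner_on_def by (simp add: sum_distrib_left sum.swap[of _ S])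

lemma double_sum_toeplitz:
  fixes a :: "nat \<Rightarrow> real"
  shows "(\<Sum>i<n. \<Sum>j<n. a (max i j - min i j)) = 2 * (\<Sum>i<n. \<Sum>k\<le>i. a k) - real n * a 0"
proof (induction n)
  case 0 then show ?case by simp
next
  case (Suc n)
  have "(\<Sum>j<n. a (n - j)) = (\<Sum>k<n. a (Suc k))"
    using sum.nat_diff_reindex[of "\<lambda>k. a (Suc k)" n] by (simp add: Suc_diff_Suc)
  moreover have "(\<Sum>k\<le>n. a k) = a 0 + (\<Sum>k<n. a (Suc k))"
    by (simp only: lessThan_Suc_atMost[symmetric] sum.lessThan_Suc_shift)
  moreover have "(\<Sum>i<Suc n. \<Sum>j<Suc n. a (max i j - min i j))
      = (\<Sum>i<n. \<Sum>j<n. a (max i j - min i j)) + (\<Sum>i<n. a (n - i)) + (\<Sum>j<n. a (n - j)) + a 0"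
    by (simp add: sum.distrib max_def min_def)
  ultimately show ?case using Suc by (simp add: algebra_simps)
qed

text \<open>The quadratic form equals \<open>-1/2 \<Sum>\<^sub>a\<^sub>q E a q (x a - x q)\<^sup>2\<close>.\<close>
lemma laplacian_quadratic_form_nonneg:
  fixes E :: "'b \<Rightarrow> 'b \<Rightarrow> real"
  assumes "finite S"
    and sym: "\<And>a q. a \<in> S \<Longrightarrow> q \<in> S \<Longrightarrow> E a q = E q a"
    and rows: "\<And>a. a \<in> S \<Longrightarrow> (\<Sum>q\<in>S. E a q) = 0"
    and off_diag: "\<And>a q. a \<in> S \<Longrightarrow> q \<in> S \<Longrightarrow> a \<noteq> q \<Longrightarrow> E a q \<le> 0"
  shows "0 \<le> (\<Sum>a\<in>S. \<Sum>q\<in>S. E a q * x a * x q)"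
proof -
  have cols: "(\<Sum>a\<in>S. E a q) = 0" if "q \<in> S" for q
    using rows[OF that] sym that by (metis (no_types, lifting) sum.cong)
  have "E a q * (x a - x q)\<^sup>2 \<le> 0" if "a \<in> S" "q \<in> S" for a q
    using that by (cases "a = q") (auto intro: mult_nonpos_nonneg off_diag)
  then have "(\<Sum>a\<in>S. \<Sum>q\<in>S. E a q * (x a - x q)\<^sup>2) \<le> 0"
    by (intro sum_nonpos) auto
  moreover have "(\<Sum>a\<in>S. \<Sum>q\<in>S. E a q * (x a - x q)\<^sup>2)
      = (\<Sum>a\<in>S. (\<Sum>q\<in>S. E a q) * (x a)\<^sup>2) + (\<Sum>a\<in>S. \<Sum>q\<in>S. E a q * (x q)\<^sup>2)
        - 2 * (\<Sum>a\<in>S. \<Sum>q\<in>S. E a q * x a * x q)"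
    by (simp add: power2_diff algebra_simps sum.distrib sum_subtractf sum_distrib_left
        sum_distrib_right)
  moreover have "(\<Sum>a\<in>S. \<Sum>q\<in>S. E a q * (x q)\<^sup>2) = (\<Sum>q\<in>S. (\<Sum>a\<in>S. E a q) * (x q)\<^sup>2)"
    by (subst sum.swap) (simp only: sum_distrib_right)
  ultimately show ?thesis by (simp add: rows cols)
qed

section \<open>Finite Markov kernels\<close>

locale finite_markov =
  fixes S :: "'b::finite set" and P :: "'b \<Rightarrow> 'b \<Rightarrow> real"
  assumes stochastic: "stochastic_on S P"
begin

lemma P_nonneg: "a \<in> S \<Longrightarrow> b \<in> S \<Longrightarrow> 0 \<le> P a b"
  using stochastic by (simp add: stochastic_on_def)

lemma P_sum: "a \<in> S \<Longrightarrow> (\<Sum>b\<in>S. P a b) = 1"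
  using stochastic by (simp add: stochastic_on_def)

lemma markov_op_const: "p \<in> S \<Longrightarrow> markov_op S P (\<lambda>_. c) p = c"
  by (simp add: markov_op_def P_sum flip: sum_distrib_right)

lemma funpow_markov_op_const: "p \<in> S \<Longrightarrow> (markov_op S P ^^ n) (\<lambda>_. c) p = c"
proof (induction n arbitrary: p)
  case (Suc n)
  then have "markov_op S P ((markov_op S P ^^ n) (\<lambda>_. c)) p = markov_op S P (\<lambda>_. c) p"
    by (intro markov_op_cong) auto
  then show ?case using Suc.prems by (simp add: markov_op_const)
qed simp

lemma funpow_markov_op_abs_le:
  assumes "\<And>q. q \<in> S \<Longrightarrow> \<bar>v q\<bar> \<le> B" and "p \<in> S"
  shows "\<bar>(markov_op S P ^^ n) v p\<bar> \<le> B"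
  using assms(2)
proof (induction n arbitrary: p)
  case 0 then show ?case using assms(1) by simp
next
  case (Suc n)
  have "\<bar>(markov_op S P ^^ Suc n) v p\<bar> \<le> (\<Sum>q\<in>S. \<bar>P p q * (markov_op S P ^^ n) v q\<bar>)"
    unfolding funpow.simps comp_def markov_op_def by (rule sum_abs)
  also have "\<dots> = (\<Sum>q\<in>S. P p q * \<bar>(markov_op S P ^^ n) v q\<bar>)"
    using P_nonneg Suc.prems by (intro sum.cong) (simp_all add: abs_mult)
  also have "\<dots> \<le> (\<Sum>q\<in>S. P p q * B)"
    using Suc P_nonneg by (intro sum_mono mult_left_mono) auto
  also have "\<dots> = B" using P_sum Suc.prems by (simp flip: sum_distrib_right)
  finally show ?case .
qed

lemma poisson_telescope:
  assumes "\<And>p. p \<in> S \<Longrightarrow> h p - markov_op S P h p = w p" and "p \<in> S"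
  shows "(\<Sum>k<n. (markov_op S P ^^ k) w p) = h p - (markov_op S P ^^ n) h p"
proof -
  have "(markov_op S P ^^ k) w p = (markov_op S P ^^ k) h p - (markov_op S P ^^ Suc k) h p" for k
  proof -
    have "(markov_op S P ^^ k) w p = (markov_op S P ^^ k) (\<lambda>q. h q - markov_op S P h q) p"
      using assms by (intro funpow_markov_op_cong) auto
    then show ?thesis by (simp add: funpow_markov_op_diff funpow_Suc_right del: funpow.simps)
  qed
  then have "(\<Sum>k<n. (markov_op S P ^^ k) w p) = (markov_op S P ^^ 0) h p - (markov_op S P ^^ n) h p"
    using sum_lessThan_telescope'[of "\<lambda>k. (markov_op S P ^^ k) h p" n] by simp
  then show ?thesis by simp
qed

lemma inner_on_poisson_partial_sum:
  assumes "\<And>p. p \<in> S \<Longrightarrow> h p - markov_op S P h p = w p"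
  shows "(\<Sum>k\<le>n. inner_on S mu g ((markov_op S P ^^ k) w))
    = inner_on S mu g h - inner_on S mu g ((markov_op S P ^^ n) (markov_op S P h))"
proof -
  have "(\<Sum>k\<le>n. inner_on S mu g ((markov_op S P ^^ k) w))
      = inner_on S mu g (\<lambda>p. \<Sum>k<Suc n. (markov_op S P ^^ k) w p)"
    by (simp add: inner_on_sum_right lessThan_Suc_atMost)
  also have "\<dots> = inner_on S mu g (\<lambda>p. h p - (markov_op S P ^^ Suc n) h p)"
    by (intro inner_on_cong refl poisson_telescope[OF assms])
  finally show ?thesis by (simp add: inner_on_diff_right funpow_Suc_right del: funpow.simps)
qed

lemma mpow_nonneg: "b \<in> S \<Longrightarrow> 0 \<le> mpow S P n a b"
  by (induction n arbitrary: b) (auto intro!: sum_nonneg mult_nonneg_nonneg P_nonneg)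

lemma sum_mpow_eq_funpow: "a \<in> S \<Longrightarrow> (\<Sum>b\<in>S. mpow S P n a b * v b) = (markov_op S P ^^ n) v a"
proof (induction n arbitrary: v)
  case 0
  have "(\<Sum>b\<in>S. mpow S P 0 a b * v b) = (\<Sum>b\<in>S. if a = b then v b else 0)"
    by (intro sum.cong) auto
  then show ?case using 0 by simp
next
  case (Suc n)
  have "(\<Sum>b\<in>S. mpow S P (Suc n) a b * v b) = (\<Sum>b\<in>S. \<Sum>c\<in>S. mpow S P n a c * P c b * v b)"
    by (simp add: sum_distrib_right)
  also have "\<dots> = (\<Sum>c\<in>S. mpow S P n a c * markov_op S P v c)"
    by (subst sum.swap) (simp add: markov_op_def sum_distrib_left mult.assoc)
  finally show ?case using Suc by (simp add: funpow_Suc_right del: funpow.simps)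
qed

lemma mpow_pos_closed:
  assumes closed: "\<And>a b. a \<in> S \<Longrightarrow> b \<in> S \<Longrightarrow> a \<in> C \<Longrightarrow> 0 < P a b \<Longrightarrow> b \<in> C"
    and "a \<in> C" and "b \<in> S" and "0 < mpow S P n a b"
  shows "b \<in> C"
  using assms(3,4)
proof (induction n arbitrary: b)
  case 0 then show ?case using \<open>a \<in> C\<close> by (simp split: if_splits)
next
  case (Suc n)
  have "0 < (\<Sum>c\<in>S. mpow S P n a c * P c b)"
    using Suc.prems(2) by simp
  then have "\<exists>c\<in>S. 0 < mpow S P n a c * P c b"
    using sum_nonpos[of S "\<lambda>c. mpow S P n a c * P c b"] by (meson not_le)
  then obtain c where c: "c \<in> S" "0 < mpow S P n a c * P c b" ..
  then have "0 < mpow S P n a c" and "0 < P c b"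
    using mpow_nonneg[OF c(1), of n a] P_nonneg[OF c(1) Suc.prems(1)]
    by (auto simp: zero_less_mult_iff)
  then show ?case using Suc c closed by blast
qed

text \<open>Maximum principle: the maximum of a harmonic function propagates along positive transitions.\<close>
lemma harmonic_const:
  assumes irr: "irreducible_on S P"
    and harmonic: "\<And>p. p \<in> S \<Longrightarrow> markov_op S P v p = v p"
    and "p \<in> S" "q \<in> S"
  shows "v p = v q"
proof -
  obtain p0 where p0: "p0 \<in> S" "v p0 = Max (v ` S)"
    using Max_in[of "v ` S"] \<open>p \<in> S\<close> by fastforce
  have max: "v c \<le> v p0" if "c \<in> S" for c
    using p0 that by simp
  have "v b = v p0" if "a \<in> S" "b \<in> S" "v a = v p0" "0 < P a b" for a b
  proof -
    have "(\<Sum>c\<in>S. P a c * (v p0 - v c)) = v p0 - markov_op S P v a"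
      using P_sum[OF \<open>a \<in> S\<close>]
      by (simp add: markov_op_def right_diff_distrib sum_subtractf flip: sum_distrib_right)
    also have "\<dots> = 0" using harmonic \<open>a \<in> S\<close> \<open>v a = v p0\<close> by simp
    finally have "P a b * (v p0 - v b) = 0"
      using sum_nonneg_eq_0_iff[of S "\<lambda>c. P a c * (v p0 - v c)"] P_nonneg max \<open>a \<in> S\<close> \<open>b \<in> S\<close>
      by simp
    then show ?thesis using \<open>0 < P a b\<close> by simp
  qed
  then have reach: "v b = v p0" if "b \<in> S" "0 < mpow S P n p0 b" for b n
    using mpow_pos_closed[of "{c. v c = v p0}" p0 b n] that by blast
  show ?thesis
    using irr p0(1) \<open>p \<in> S\<close> \<open>q \<in> S\<close> reach unfolding irreducible_on_def by metis
qed

end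

locale stationary_markov = finite_markov +
  fixes mu :: "'b::finite \<Rightarrow> real"
  assumes mu_nonneg: "\<And>a. a \<in> S \<Longrightarrow> 0 \<le> mu a"
    and mu_sum: "(\<Sum>a\<in>S. mu a) = 1"
    and stationary: "\<And>b. b \<in> S \<Longrightarrow> (\<Sum>a\<in>S. mu a * P a b) = mu b"
begin

lemma sum_mu_markov_op: "(\<Sum>p\<in>S. mu p * markov_op S P v p) = (\<Sum>p\<in>S. mu p * v p)"
proof -
  have "(\<Sum>p\<in>S. mu p * markov_op S P v p) = (\<Sum>p\<in>S. \<Sum>q\<in>S. mu p * P p q * v q)"
    by (simp add: markov_op_def sum_distrib_left mult.assoc)
  also have "\<dots> = (\<Sum>q\<in>S. (\<Sum>p\<in>S. mu p * P p q) * v q)"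
    by (subst sum.swap) (simp add: sum_distrib_right)
  finally show ?thesis by (simp add: stationary)
qed

lemma dist_at_stationary: "b \<in> S \<Longrightarrow> dist_at S P mu n b = mu b"
proof (induction n arbitrary: b)
  case 0
  have "dist_at S P mu 0 b = (\<Sum>a\<in>S. if a = b then mu a else 0)"
    unfolding dist_at_def by (intro sum.cong) auto
  then show ?case using 0 by simp
next
  case (Suc n)
  have "dist_at S P mu (Suc n) b = (\<Sum>a\<in>S. \<Sum>c\<in>S. mu a * mpow S P n a c * P c b)"
    unfolding dist_at_def by (simp add: sum_distrib_left mult.assoc)
  also have "\<dots> = (\<Sum>c\<in>S. dist_at S P mu n c * P c b)"
    unfolding dist_at_def by (subst sum.swap) (simp add: sum_distrib_right)
  also have "\<dots> = (\<Sum>c\<in>S. mu c * P c b)" using Suc by simp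
  finally show ?case using Suc.prems stationary by simp
qed

lemma mu_pos:
  assumes irr: "irreducible_on S P" and "b \<in> S"
  shows "0 < mu b"
proof -
  have "\<exists>a\<in>S. 0 < mu a"
  proof (rule ccontr)
    assume "\<not> ?thesis"
    then have "(\<Sum>a\<in>S. mu a) \<le> 0" by (intro sum_nonpos) (auto simp: not_less)
    with mu_sum show False by simp
  qed
  then obtain a where a: "a \<in> S" "0 < mu a" ..
  then obtain n where n: "0 < mpow S P n a b"
    using irr \<open>b \<in> S\<close> unfolding irreducible_on_def by blast
  have "mu a * mpow S P n a b \<le> dist_at S P mu n b"
    unfolding dist_at_def using a
    by (intro member_le_sum) (auto intro: mult_nonneg_nonneg mu_nonneg mpow_nonneg \<open>b \<in> S\<close>)
  moreover have "0 < mu a * mpow S P n a b" using a n by simp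
  ultimately show ?thesis using dist_at_stationary[OF \<open>b \<in> S\<close>] by simp
qed

lemma inner_markov_op_le: "inner_on S mu u (markov_op S P u) \<le> inner_on S mu u u"
proof -
  have "inner_on S mu u (markov_op S P u) = (\<Sum>p\<in>S. \<Sum>q\<in>S. mu p * P p q * (u p * u q))"
    by (simp add: inner_on_def markov_op_def sum_distrib_left ac_simps)
  also have "\<dots> \<le> (\<Sum>p\<in>S. \<Sum>q\<in>S. mu p * P p q * ((u p)\<^sup>2 / 2) + mu p * P p q * ((u q)\<^sup>2 / 2))"
  proof (intro sum_mono)
    fix p q assume "p \<in> S" "q \<in> S"
    have "u p * u q \<le> (u p)\<^sup>2 / 2 + (u q)\<^sup>2 / 2"
      using zero_le_power2[of "u p - u q"] unfolding power2_diff by linarith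
    moreover have "0 \<le> mu p * P p q" by (simp add: \<open>p \<in> S\<close> \<open>q \<in> S\<close> mu_nonneg P_nonneg)
    ultimately have "mu p * P p q * (u p * u q) \<le> mu p * P p q * ((u p)\<^sup>2 / 2 + (u q)\<^sup>2 / 2)"
      by (rule mult_left_mono)
    then show "mu p * P p q * (u p * u q)
        \<le> mu p * P p q * ((u p)\<^sup>2 / 2) + mu p * P p q * ((u q)\<^sup>2 / 2)"
      by (simp only: distrib_left)
  qed
  also have "\<dots> = (\<Sum>p\<in>S. \<Sum>q\<in>S. mu p * P p q * ((u p)\<^sup>2 / 2))
      + (\<Sum>p\<in>S. \<Sum>q\<in>S. mu p * P p q * ((u q)\<^sup>2 / 2))"
    by (simp only: sum.distrib)
  also have "(\<Sum>p\<in>S. \<Sum>q\<in>S. mu p * P p q * ((u p)\<^sup>2 / 2))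
      = (\<Sum>p\<in>S. mu p * ((u p)\<^sup>2 / 2) * (\<Sum>q\<in>S. P p q))"
    by (simp only: sum_distrib_left) (simp add: ac_simps)
  also have "(\<Sum>p\<in>S. \<Sum>q\<in>S. mu p * P p q * ((u q)\<^sup>2 / 2))
      = (\<Sum>q\<in>S. (\<Sum>p\<in>S. mu p * P p q) * ((u q)\<^sup>2 / 2))"
    by (subst sum.swap) (simp only: sum_distrib_right)
  also have "(\<Sum>p\<in>S. mu p * ((u p)\<^sup>2 / 2) * (\<Sum>q\<in>S. P p q))
      + (\<Sum>q\<in>S. (\<Sum>p\<in>S. mu p * P p q) * ((u q)\<^sup>2 / 2)) = inner_on S mu u u"
    by (simp add: P_sum stationary inner_on_def power2_eq_square mult.assoc flip: sum.distrib)
  finally show ?thesis .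
qed

lemma sum_mu_poisson_defect: "(\<Sum>p\<in>S. mu p * (v p - markov_op S P v p + c)) = c"
proof -
  have "(\<Sum>p\<in>S. mu p * (v p - markov_op S P v p + c))
      = (\<Sum>p\<in>S. mu p * v p) - (\<Sum>p\<in>S. mu p * markov_op S P v p) + c * (\<Sum>p\<in>S. mu p)"
    by (simp add: right_diff_distrib distrib_left sum.distrib sum_subtractf sum_distrib_left
        mult.commute)
  then show ?thesis by (simp add: sum_mu_markov_op mu_sum)
qed

lemma poisson_homogeneous_zero:
  assumes irr: "irreducible_on S P"
    and eq: "\<And>p. p \<in> S \<Longrightarrow> v p - markov_op S P v p + (\<Sum>q\<in>S. mu q * v q) = 0"
    and "p \<in> S"
  shows "v p = 0"
proof -
  define c where "c = (\<Sum>q\<in>S. mu q * v q)"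
  have c0: "c = 0"
    using sum_mu_poisson_defect[of v c] eq by (simp add: c_def)
  have harmonic: "markov_op S P v q = v q" if "q \<in> S" for q
    using eq[OF that] c0 c_def by simp
  have "c = (\<Sum>q\<in>S. mu q * v p)"
    unfolding c_def by (intro sum.cong refl) (metis harmonic_const[OF irr harmonic] \<open>p \<in> S\<close>)
  then show ?thesis using c0 mu_sum by (simp flip: sum_distrib_right)
qed

text \<open>The Poisson equation is solved by inverting \<open>x \<mapsto> x - P x + mean x\<close>, which is injective by
  \<open>poisson_homogeneous_zero\<close>, hence surjective.\<close>
lemma poisson_solvable:
  assumes irr: "irreducible_on S P" and mean: "(\<Sum>p\<in>S. mu p * w p) = 0"
  obtains h where "\<And>p. p \<in> S \<Longrightarrow> h p - markov_op S P h p = w p"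
proof -
  define \<Phi> :: "real^'b \<Rightarrow> real^'b" where
    "\<Phi> x = (\<chi> p. if p \<in> S then x$p - markov_op S P (($) x) p + (\<Sum>q\<in>S. mu q * x$q) else x$p)" for x
  have lin: "linear \<Phi>"
    by (rule linearI)
      (simp_all add: \<Phi>_def vec_eq_iff markov_op_def sum.distrib sum_distrib_left ring_distribs
        mult.left_commute)
  have "inj \<Phi>"
    unfolding linear_injective_0[OF lin]
  proof (intro allI impI)
    fix x assume "\<Phi> x = 0"
    then have x0: "\<Phi> x $ p = 0" for p by simp
    have "x$p = 0" for p
    proof (cases "p \<in> S")
      case True
      have "x$q - markov_op S P (($) x) q + (\<Sum>q\<in>S. mu q * x$q) = 0" if "q \<in> S" for q
        using x0[of q] that by (simp add: \<Phi>_def)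
      then show ?thesis using poisson_homogeneous_zero[OF irr, of "($) x" p] True by simp
    next
      case False
      then show ?thesis using x0[of p] by (simp add: \<Phi>_def)
    qed
    then show "x = 0" by (simp add: vec_eq_iff)
  qed
  then obtain x where x: "\<Phi> x = (\<chi> p. w p)"
    using linear_inj_imp_surj[OF lin] by (metis surjD)
  define c where "c = (\<Sum>q\<in>S. mu q * x$q)"
  have sol: "x$p - markov_op S P (($) x) p + c = w p" if "p \<in> S" for p
    using arg_cong[OF x, of "\<lambda>y. y$p"] that by (simp add: \<Phi>_def c_def)
  then have "c = 0"
    using sum_mu_poisson_defect[of "($) x" c] mean by simp
  then show ?thesis using sol that[of "($) x"] by simp
qed

lemma funpow_partial_sums_bounded:
  assumes irr: "irreducible_on S P" and mean: "(\<Sum>p\<in>S. mu p * w p) = 0"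
  obtains B where "\<And>n p. p \<in> S \<Longrightarrow> \<bar>\<Sum>k<n. (markov_op S P ^^ k) w p\<bar> \<le> B"
proof -
  obtain h where h_poisson: "\<And>p. p \<in> S \<Longrightarrow> h p - markov_op S P h p = w p"
    using poisson_solvable[OF irr mean] by blast
  define B where "B = (\<Sum>q\<in>S. \<bar>h q\<bar>)"
  have hB: "\<bar>h q\<bar> \<le> B" if "q \<in> S" for q
    unfolding B_def using that by (intro member_le_sum) auto
  have "\<bar>\<Sum>k<n. (markov_op S P ^^ k) w p\<bar> \<le> 2 * B" if "p \<in> S" for n p
    using poisson_telescope[OF h_poisson that, where n = n] hB[OF that]
      funpow_markov_op_abs_le[where v = h and B = B, OF hB that, where n = n]
    by linarith
  then show ?thesis using that by blast
qed

lemma inner_on_abs_le: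
  assumes "\<And>q. q \<in> S \<Longrightarrow> \<bar>v q\<bar> \<le> B"
  shows "\<bar>inner_on S mu g v\<bar> \<le> (\<Sum>p\<in>S. mu p * \<bar>g p\<bar>) * B"
proof -
  have "\<bar>inner_on S mu g v\<bar> \<le> (\<Sum>p\<in>S. \<bar>mu p * g p * v p\<bar>)"
    unfolding inner_on_def by (rule sum_abs)
  also have "\<dots> = (\<Sum>p\<in>S. mu p * \<bar>g p\<bar> * \<bar>v p\<bar>)"
    using mu_nonneg by (intro sum.cong) (simp_all add: abs_mult)
  also have "\<dots> \<le> (\<Sum>p\<in>S. mu p * \<bar>g p\<bar> * B)"
    using assms mu_nonneg by (intro sum_mono mult_left_mono) auto
  finally show ?thesis by (simp add: sum_distrib_right)
qed

section \<open>Asymptotic variance\<close>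

lemma scaled_var_avg_stationary:
  assumes "0 < n" and m: "m = (\<Sum>p\<in>S. mu p * g p)"
  shows "real n * var_avg S P mu g n
    = (2 * (\<Sum>i<n. \<Sum>k\<le>i. inner_on S mu g ((markov_op S P ^^ k) (\<lambda>p. g p - m)))
       - real n * inner_on S mu g (\<lambda>p. g p - m)) / real n"
proof -
  define a where "a k = inner_on S mu g ((markov_op S P ^^ k) (\<lambda>p. g p - m))" for k
  have "chain_moment2 S P mu g i j = a (max i j - min i j) + m * m" for i j
  proof -
    have "chain_moment2 S P mu g i j = inner_on S mu g ((markov_op S P ^^ (max i j - min i j)) g)"
      unfolding chain_moment2_def inner_on_def
      by (intro sum.cong refl) (simp add: dist_at_stationary sum_mpow_eq_funpow)
    also have "\<dots> = inner_on S mu g (\<lambda>p. (markov_op S P ^^ (max i j - min i j)) (\<lambda>p. g p - m) p + m)"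
      by (intro inner_on_cong) (simp_all add: funpow_markov_op_diff funpow_markov_op_const)
    finally show ?thesis by (simp add: a_def inner_on_add_right inner_on_const_right m)
  qed
  then have moments: "(\<Sum>i<n. \<Sum>j<n. chain_moment2 S P mu g i j)
      = 2 * (\<Sum>i<n. \<Sum>k\<le>i. a k) - real n * a 0 + (real n)\<^sup>2 * m\<^sup>2"
    by (simp add: sum.distrib double_sum_toeplitz power2_eq_square)
  have "chain_mean S P mu g i = m" for i
    unfolding chain_mean_def m by (intro sum.cong refl) (simp add: dist_at_stationary)
  then have means: "(\<Sum>i<n. chain_mean S P mu g i) / real n = m"
    using \<open>0 < n\<close> by simp
  show ?thesis
    unfolding var_avg_def moments means using \<open>0 < n\<close>
    by (simp add: a_def field_simps power2_eq_square)
qed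

lemma asymptotic_variance_centered:
  assumes irr: "irreducible_on S P"
    and m: "m = (\<Sum>p\<in>S. mu p * g p)"
    and poisson: "\<And>p. p \<in> S \<Longrightarrow> h p - markov_op S P h p = g p - m"
    and centered: "(\<Sum>p\<in>S. mu p * h p) = 0"
  shows "(\<lambda>n. real n * var_avg S P mu g n) \<longlonglongrightarrow> 2 * inner_on S mu g h - inner_on S mu g (\<lambda>p. g p - m)"
proof -
  define L where "L = 2 * inner_on S mu g h - inner_on S mu g (\<lambda>p. g p - m)"
  define R where "R n = inner_on S mu g (\<lambda>p. \<Sum>i<n. (markov_op S P ^^ i) (markov_op S P h) p)" for n
  have "(\<Sum>i<n. inner_on S mu g ((markov_op S P ^^ i) (markov_op S P h))) = R n" for n
    unfolding R_def by (simp add: inner_on_sum_right)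
  then have eq: "real n * var_avg S P mu g n = L - 2 * R n / real n" if "0 < n" for n
    using that by (simp add: scaled_var_avg_stationary[OF that m]
        inner_on_poisson_partial_sum[OF poisson] sum_subtractf L_def field_simps)
  have "(\<Sum>p\<in>S. mu p * markov_op S P h p) = 0"
    using centered by (simp add: sum_mu_markov_op)
  then obtain B where B: "\<And>n p. p \<in> S \<Longrightarrow> \<bar>\<Sum>i<n. (markov_op S P ^^ i) (markov_op S P h) p\<bar> \<le> B"
    using funpow_partial_sums_bounded[OF irr] by blast
  define C where "C = (\<Sum>p\<in>S. mu p * \<bar>g p\<bar>) * B"
  have "(\<lambda>n. 2 * R n / real n) \<longlonglongrightarrow> 0"
  proof (rule Lim_null_comparison)
    have "\<bar>R n\<bar> \<le> C" for n
      unfolding R_def C_def by (rule inner_on_abs_le[OF B])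
    then show "\<forall>\<^sub>F n in sequentially. norm (2 * R n / real n) \<le> 2 * C / real n"
      by (auto simp: abs_mult intro!: divide_right_mono always_eventually)
  qed (rule lim_const_over_n)
  then have "(\<lambda>n. L - 2 * R n / real n) \<longlonglongrightarrow> L"
    using tendsto_diff[OF tendsto_const] by fastforce
  then show ?thesis
    unfolding L_def[symmetric]
    by (rule Lim_transform_eventually) (rule eventually_sequentiallyI[of 1], simp add: eq)
qed

theorem asymptotic_variance:
  assumes irr: "irreducible_on S P"
    and m: "m = (\<Sum>p\<in>S. mu p * g p)"
    and poisson: "\<And>p. p \<in> S \<Longrightarrow> h p - markov_op S P h p = g p - m"
  shows "(\<lambda>n. real n * var_avg S P mu g n) \<longlonglongrightarrow>
    2 * inner_on S mu (\<lambda>p. g p - m) h - inner_on S mu (\<lambda>p. g p - m) (\<lambda>p. g p - m)"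
proof -
  define c where "c = (\<Sum>p\<in>S. mu p * h p)"
  have "(\<lambda>n. real n * var_avg S P mu g n) \<longlonglongrightarrow>
      2 * inner_on S mu g (\<lambda>p. h p - c) - inner_on S mu g (\<lambda>p. g p - m)"
  proof (rule asymptotic_variance_centered[OF irr m])
    show "h p - c - markov_op S P (\<lambda>p. h p - c) p = g p - m" if "p \<in> S" for p
      using poisson[OF that] markov_op_const[OF that] by (simp add: markov_op_diff)
    show "(\<Sum>p\<in>S. mu p * (h p - c)) = 0"
      by (simp add: c_def right_diff_distrib sum_subtractf mu_sum flip: sum_distrib_right)
  qed
  moreover have "inner_on S mu g (\<lambda>p. h p - c) = inner_on S mu (\<lambda>p. g p - m) h"
    using inner_on_commute[of S mu g h]
    by (simp add: inner_on_diff_left inner_on_diff_right inner_on_const_left inner_on_const_right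
        c_def flip: m)
  moreover have "inner_on S mu g (\<lambda>p. g p - m) = inner_on S mu (\<lambda>p. g p - m) (\<lambda>p. g p - m)"
  proof -
    have "(\<Sum>p\<in>S. mu p * (g p - m)) = 0"
      by (simp add: m right_diff_distrib sum_subtractf mu_sum flip: sum_distrib_right)
    then show ?thesis by (simp add: inner_on_diff_left inner_on_const_left)
  qed
  ultimately show ?thesis by simp
qed

end

section \<open>Kernels reversible up to an involution\<close>

locale skew_reversible = finite_markov +
  fixes mu :: "'b::finite \<Rightarrow> real" and J :: "'b \<Rightarrow> 'b"
  assumes mu_nonneg: "\<And>a. a \<in> S \<Longrightarrow> 0 \<le> mu a"
    and mu_sum: "(\<Sum>a\<in>S. mu a) = 1"
    and J_in: "\<And>p. p \<in> S \<Longrightarrow> J p \<in> S"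
    and J_J: "\<And>p. p \<in> S \<Longrightarrow> J (J p) = p"
    and mu_J: "\<And>p. p \<in> S \<Longrightarrow> mu (J p) = mu p"
    and skew: "\<And>p q. p \<in> S \<Longrightarrow> q \<in> S \<Longrightarrow> mu p * P p q = mu (J q) * P (J q) (J p)"
begin

lemma sum_J: "(\<Sum>p\<in>S. f (J p)) = (\<Sum>p\<in>S. f p)"
  by (rule sum.reindex_bij_betw, rule bij_betwI[where g = J]) (simp_all add: J_in J_J)

sublocale stationary_markov S P mu
proof
  fix q assume q: "q \<in> S"
  have "(\<Sum>p\<in>S. mu p * P p q) = mu (J q) * (\<Sum>p\<in>S. P (J q) (J p))"
    using skew q by (simp add: sum_distrib_left)
  also have "\<dots> = mu (J q)"
    using sum_J[of "P (J q)"] P_sum[OF J_in[OF q]] by simp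
  finally show "(\<Sum>p\<in>S. mu p * P p q) = mu q" using mu_J q by simp
qed (simp_all add: mu_nonneg mu_sum)

lemma inner_on_J: "inner_on S mu u v = inner_on S mu (\<lambda>p. u (J p)) (\<lambda>p. v (J p))"
  unfolding inner_on_def using sum_J[of "\<lambda>p. mu p * u p * v p"] by (simp add: mu_J)

lemma inner_on_odd_even:
  assumes "\<And>p. p \<in> S \<Longrightarrow> c (J p) = - c p" and "\<And>p. p \<in> S \<Longrightarrow> s (J p) = s p"
  shows "inner_on S mu c s = 0"
proof -
  have "inner_on S mu c s = inner_on S mu (\<lambda>p. - c p) s"
    by (subst inner_on_J) (intro inner_on_cong; simp add: assms)
  then show ?thesis using inner_on_scale_left[of S mu "-1" c s] by simp
qed

lemma inner_markov_op_adjoint: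
  "inner_on S mu u (markov_op S P v) = inner_on S mu (\<lambda>p. v (J p)) (markov_op S P (\<lambda>p. u (J p)))"
proof -
  have "inner_on S mu u (markov_op S P v) = (\<Sum>p\<in>S. \<Sum>q\<in>S. mu p * P p q * u p * v q)"
    by (simp add: inner_on_def markov_op_def sum_distrib_left mult.assoc mult.left_commute)
  also have "\<dots> = (\<Sum>p\<in>S. \<Sum>q\<in>S. mu (J q) * P (J q) (J p) * u p * v q)"
    by (intro sum.cong refl) (simp add: skew)
  also have "\<dots> = (\<Sum>p\<in>S. \<Sum>q\<in>S. mu (J q) * P (J q) p * u (J p) * v q)"
    using sum_J[of "\<lambda>p. \<Sum>q\<in>S. mu (J q) * P (J q) p * u (J p) * v q"] by (simp add: J_J)
  also have "\<dots> = (\<Sum>p\<in>S. \<Sum>q\<in>S. mu q * P q p * u (J p) * v (J q))"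
  proof (rule sum.cong[OF refl])
    fix p
    show "(\<Sum>q\<in>S. mu (J q) * P (J q) p * u (J p) * v q) = (\<Sum>q\<in>S. mu q * P q p * u (J p) * v (J q))"
      using sum_J[of "\<lambda>q. mu q * P q p * u (J p) * v (J q)"] by (simp add: J_J)
  qed
  also have "\<dots> = inner_on S mu (\<lambda>p. v (J p)) (markov_op S P (\<lambda>p. u (J p)))"
    by (subst sum.swap) (simp add: inner_on_def markov_op_def sum_distrib_left ac_simps)
  finally show ?thesis .
qed

lemma inner_laplacian_swap:
  "inner_on S mu (\<lambda>p. u (J p)) (\<lambda>p. v p - markov_op S P v p)
    = inner_on S mu (\<lambda>p. v (J p)) (\<lambda>p. u p - markov_op S P u p)"
proof -
  have "markov_op S P (\<lambda>q. u (J (J q))) = markov_op S P u"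
    by (rule ext, rule markov_op_cong) (simp add: J_J)
  then have "inner_on S mu (\<lambda>p. u (J p)) (markov_op S P v)
      = inner_on S mu (\<lambda>p. v (J p)) (markov_op S P u)"
    using inner_markov_op_adjoint[of "\<lambda>p. u (J p)" v] by simp
  moreover have "inner_on S mu (\<lambda>p. u (J p)) v = inner_on S mu (\<lambda>p. v (J p)) u"
    using inner_on_J[of "\<lambda>p. u (J p)" v] inner_on_commute[of S mu u]
    by (simp add: J_J cong: inner_on_cong)
  ultimately show ?thesis by (simp add: inner_on_diff_right)
qed

lemma twisted_form_add:
  "twisted_form S mu P J (\<lambda>p. y p + z p)
    = twisted_form S mu P J y + 2 * inner_on S mu (\<lambda>p. z (J p)) (\<lambda>p. y p - markov_op S P y p)
      + twisted_form S mu P J z"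
proof -
  have "(\<lambda>p. y p + z p - markov_op S P (\<lambda>q. y q + z q) p)
      = (\<lambda>p. (y p - markov_op S P y p) + (z p - markov_op S P z p))"
    by (simp add: markov_op_add fun_eq_iff)
  then show ?thesis
    unfolding twisted_form_def using inner_laplacian_swap[of y z]
    by (simp add: inner_on_add_left inner_on_add_right)
qed

lemma twisted_form_even_nonneg:
  assumes "\<And>p. p \<in> S \<Longrightarrow> e (J p) = e p"
  shows "0 \<le> twisted_form S mu P J e"
proof -
  have "twisted_form S mu P J e = inner_on S mu e e - inner_on S mu e (markov_op S P e)"
    unfolding twisted_form_def inner_on_diff_right[symmetric]
    by (intro inner_on_cong) (simp_all add: assms)
  then show ?thesis using inner_markov_op_le[of e] by simp
qed

lemma twisted_form_odd_nonpos:
  assumes "\<And>p. p \<in> S \<Longrightarrow> c (J p) = - c p"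
  shows "twisted_form S mu P J c \<le> 0"
proof -
  have "twisted_form S mu P J c = - (inner_on S mu c c - inner_on S mu c (markov_op S P c))"
    unfolding twisted_form_def inner_on_diff_right[symmetric]
    using inner_on_scale_left[of S mu "-1" c]
    by (simp add: assms cong: inner_on_cong)
  then show ?thesis using inner_markov_op_le[of c] by simp
qed

lemma twisted_form_poisson:
  assumes even: "\<And>p. p \<in> S \<Longrightarrow> s (J p) = s p"
    and k: "\<And>p. p \<in> S \<Longrightarrow> k p - markov_op S P k p = s p"
  shows "twisted_form S mu P J k = inner_on S mu s k"
proof -
  have "twisted_form S mu P J k = inner_on S mu (\<lambda>p. k (J p)) s"
    unfolding twisted_form_def by (intro inner_on_cong) (simp_all add: k)
  also have "\<dots> = inner_on S mu (\<lambda>p. k (J (J p))) (\<lambda>p. s (J p))"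
    by (rule inner_on_J)
  also have "\<dots> = inner_on S mu k s"
    by (intro inner_on_cong) (simp_all add: J_J even)
  finally show ?thesis by (simp add: inner_on_commute)
qed

lemma twisted_form_poisson_add_even:
  assumes even: "\<And>p. p \<in> S \<Longrightarrow> s (J p) = s p"
    and k: "\<And>p. p \<in> S \<Longrightarrow> k p - markov_op S P k p = s p"
    and e: "\<And>p. p \<in> S \<Longrightarrow> e (J p) = e p"
  shows "inner_on S mu s k + 2 * inner_on S mu s e \<le> twisted_form S mu P J (\<lambda>p. k p + e p)"
proof -
  have "inner_on S mu (\<lambda>p. e (J p)) (\<lambda>p. k p - markov_op S P k p) = inner_on S mu e s"
    by (intro inner_on_cong) (simp_all add: e k)
  then show ?thesis
    using twisted_form_add[of k e] twisted_form_poisson[where s = s and k = k, OF even k]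
      twisted_form_even_nonneg[where e = e, OF e] inner_on_commute[of S mu e s]
    by simp
qed

lemma twisted_form_poisson_add_odd:
  assumes even: "\<And>p. p \<in> S \<Longrightarrow> s (J p) = s p"
    and k: "\<And>p. p \<in> S \<Longrightarrow> k p - markov_op S P k p = s p"
    and c: "\<And>p. p \<in> S \<Longrightarrow> c (J p) = - c p"
  shows "twisted_form S mu P J (\<lambda>p. k p + c p) \<le> inner_on S mu s k"
proof -
  have "inner_on S mu (\<lambda>p. c (J p)) (\<lambda>p. k p - markov_op S P k p) = inner_on S mu (\<lambda>p. - c p) s"
    by (intro inner_on_cong) (simp_all add: c k)
  also have "\<dots> = 0"
    using inner_on_scale_left[of S mu "-1" c s] inner_on_odd_even[where c = c and s = s, OF c even]
    by simp
  finally show ?thesis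
    using twisted_form_add[of k c] twisted_form_poisson[where s = s and k = k, OF even k]
      twisted_form_odd_nonpos[where c = c, OF c]
    by simp
qed

lemma poisson_inner_decomp:
  assumes g: "\<And>p. p \<in> S \<Longrightarrow> g p = g_prev (J p)"
    and Pg_prev: "\<And>p. p \<in> S \<Longrightarrow> markov_op S P g_prev p = g p"
    and h: "\<And>p. p \<in> S \<Longrightarrow> h p - markov_op S P h p = g p"
  defines "s \<equiv> \<lambda>p. (g_prev p + g p) / 2" and "k \<equiv> \<lambda>p. h p + g_prev p / 2"
  shows "inner_on S mu g h = inner_on S mu s k + inner_on S mu s s / 2 - inner_on S mu g g_prev / 2"
proof -
  define t where "t p = (g p - g_prev p) / 2" for p
  have s_even: "s (J p) = s p" and t_odd: "t (J p) = - t p" if "p \<in> S" for p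
    using g[OF that] g[OF J_in[OF that]] J_J[OF that]
    by (simp_all add: s_def t_def minus_divide_left minus_diff_eq)
  have "inner_on S mu (\<lambda>p. k (J p)) (\<lambda>p. g_prev p - markov_op S P g_prev p)
      = inner_on S mu (\<lambda>p. k (J (J p))) (\<lambda>p. g_prev (J p) - g (J p))"
    by (subst inner_on_J) (intro inner_on_cong; simp add: Pg_prev J_in)
  also have "\<dots> = inner_on S mu (\<lambda>p. 2 * t p) k"
    using g J_in J_J by (subst inner_on_commute) (intro inner_on_cong; simp add: t_def)
  also have "\<dots> = 2 * inner_on S mu t k"
    by (rule inner_on_scale_left)
  finally have "2 * inner_on S mu t k
      = inner_on S mu (\<lambda>p. g_prev (J p)) (\<lambda>p. k p - markov_op S P k p)"
    by (simp add: inner_laplacian_swap)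
  also have "\<dots> = inner_on S mu (\<lambda>p. s p + t p) s"
    using poisson_shift_half[OF Pg_prev h]
    by (intro inner_on_cong) (simp_all add: g s_def t_def k_def field_simps)
  also have "\<dots> = inner_on S mu s s"
    using inner_on_odd_even[where c = t and s = s, OF t_odd s_even] by (simp add: inner_on_add_left)
  finally have "inner_on S mu t k = inner_on S mu s s / 2" by simp
  moreover have "inner_on S mu s k + inner_on S mu t k - inner_on S mu g g_prev / 2
      = (\<Sum>p\<in>S. mu p * s p * k p + mu p * t p * k p - mu p * g p * g_prev p / 2)"
    by (simp add: inner_on_def sum.distrib sum_subtractf sum_divide_distrib)
  moreover have "\<dots> = inner_on S mu g h"
    unfolding inner_on_def by (intro sum.cong refl) (simp add: s_def t_def k_def field_simps)
  ultimately show ?thesis by simp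
qed

end

lemma twisted_form_mono:
  assumes K: "skew_reversible S P mu J" and K': "skew_reversible S P' mu J"
    and dom: "\<And>p q. p \<in> S \<Longrightarrow> q \<in> S \<Longrightarrow> q \<noteq> J p \<Longrightarrow> P p q \<le> P' p q"
  shows "twisted_form S mu P J x \<le> twisted_form S mu P' J x"
proof -
  interpret A: skew_reversible S P mu J by (rule K)
  interpret B: skew_reversible S P' mu J by (rule K')
  define E where "E a q = mu (J a) * (P (J a) q - P' (J a) q)" for a q
  have "twisted_form S mu P' J x - twisted_form S mu P J x
      = inner_on S mu (\<lambda>p. x (J p)) (\<lambda>p. markov_op S P x p - markov_op S P' x p)"
    unfolding twisted_form_def by (simp add: inner_on_diff_right)
  also have "\<dots> = (\<Sum>p\<in>S. \<Sum>q\<in>S. mu p * (P p q - P' p q) * x (J p) * x q)"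
    unfolding inner_on_def markov_op_def
    by (simp add: sum_subtractf[symmetric] sum_distrib_left algebra_simps)
  also have "\<dots> = (\<Sum>a\<in>S. \<Sum>q\<in>S. E a q * x a * x q)"
    using A.sum_J[of "\<lambda>p. \<Sum>q\<in>S. mu p * (P p q - P' p q) * x (J p) * x q"]
    by (simp add: E_def A.J_J)
  also have "0 \<le> \<dots>"
  proof (rule laplacian_quadratic_form_nonneg)
    fix a q assume a: "a \<in> S" and q: "q \<in> S"
    have "mu (J a) * P (J a) q = mu (J q) * P (J q) a"
      and "mu (J a) * P' (J a) q = mu (J q) * P' (J q) a"
      using A.skew[OF A.J_in[OF a] q] B.skew[OF A.J_in[OF a] q] A.J_J[OF a] by simp_all
    then show "E a q = E q a" unfolding E_def by (simp add: algebra_simps)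
    show "a \<noteq> q \<Longrightarrow> E a q \<le> 0"
      using dom[OF A.J_in[OF a] q] A.J_J[OF a] A.mu_nonneg[OF A.J_in[OF a]]
      unfolding E_def by (auto intro: mult_nonneg_nonpos)
  next
    fix a assume "a \<in> S"
    then show "(\<Sum>q\<in>S. E a q) = 0"
      using A.P_sum[OF A.J_in] B.P_sum[OF A.J_in] unfolding E_def
      by (simp add: sum_subtractf flip: sum_distrib_left)
  qed simp
  finally show ?thesis by simp
qed

text \<open>Write one function as \<open>x = k + e = k' + c\<close> with \<open>e\<close> \<open>J\<close>-even and \<open>c\<close> \<open>J\<close>-odd.
  Evaluating the twisted forms of \<open>P\<close> and \<open>P'\<close> at \<open>x\<close> gives
  \<open>\<langle>s, k\<rangle> + 2 \<langle>s, e\<rangle> \<le> \<langle>s, k'\<rangle>\<close>, whereas \<open>\<langle>s, x\<rangle>\<close> shows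
  \<open>\<langle>s, k'\<rangle> = \<langle>s, k\<rangle> + \<langle>s, e\<rangle>\<close>.\<close>
lemma poisson_even_inner_mono:
  assumes K: "skew_reversible S P mu J" and K': "skew_reversible S P' mu J"
    and dom: "\<And>p q. p \<in> S \<Longrightarrow> q \<in> S \<Longrightarrow> q \<noteq> J p \<Longrightarrow> P p q \<le> P' p q"
    and even: "\<And>p. p \<in> S \<Longrightarrow> s (J p) = s p"
    and k: "\<And>p. p \<in> S \<Longrightarrow> k p - markov_op S P k p = s p"
    and k': "\<And>p. p \<in> S \<Longrightarrow> k' p - markov_op S P' k' p = s p"
  shows "inner_on S mu s k' \<le> inner_on S mu s k"
proof -
  interpret A: skew_reversible S P mu J by (rule K)
  interpret B: skew_reversible S P' mu J by (rule K')
  define e where "e p = (k' p - k p + k' (J p) - k (J p)) / 2" for p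
  define c where "c p = (k p - k' p - k (J p) + k' (J p)) / 2" for p
  have x: "(\<lambda>p. k p + e p) = (\<lambda>p. k' p + c p)"
    by (simp add: fun_eq_iff e_def c_def field_simps)
  have e_even: "e (J p) = e p" and c_odd: "c (J p) = - c p" if "p \<in> S" for p
    using A.J_J[OF that] by (simp_all add: e_def c_def field_simps)
  have "inner_on S mu s k + 2 * inner_on S mu s e \<le> twisted_form S mu P J (\<lambda>p. k p + e p)"
    by (rule A.twisted_form_poisson_add_even[where s = s and k = k and e = e, OF even k e_even])
  also have "\<dots> \<le> twisted_form S mu P' J (\<lambda>p. k' p + c p)"
    unfolding x[symmetric] by (rule twisted_form_mono[OF K K' dom])
  also have "\<dots> \<le> inner_on S mu s k'"
    by (rule B.twisted_form_poisson_add_odd[where s = s and k = k' and c = c, OF even k' c_odd])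
  finally have "inner_on S mu s k + 2 * inner_on S mu s e \<le> inner_on S mu s k'" .
  moreover have "inner_on S mu s k + inner_on S mu s e = inner_on S mu s k' + inner_on S mu s c"
    using arg_cong[OF x, of "inner_on S mu s"] by (simp add: inner_on_add_right)
  moreover have "inner_on S mu s c = 0"
    using A.inner_on_odd_even[where c = c and s = s, OF c_odd even] by (simp add: inner_on_commute)
  ultimately show ?thesis by linarith
qed

lemma poisson_inner_mono:
  assumes K: "skew_reversible S P mu J" and K': "skew_reversible S P' mu J"
    and dom: "\<And>p q. p \<in> S \<Longrightarrow> q \<in> S \<Longrightarrow> q \<noteq> J p \<Longrightarrow> P p q \<le> P' p q"
    and g: "\<And>p. p \<in> S \<Longrightarrow> g p = g_prev (J p)"
    and Pg_prev: "\<And>p. p \<in> S \<Longrightarrow> markov_op S P g_prev p = g p"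
    and P'g_prev: "\<And>p. p \<in> S \<Longrightarrow> markov_op S P' g_prev p = g p"
    and h: "\<And>p. p \<in> S \<Longrightarrow> h p - markov_op S P h p = g p"
    and h': "\<And>p. p \<in> S \<Longrightarrow> h' p - markov_op S P' h' p = g p"
  shows "inner_on S mu g h' \<le> inner_on S mu g h"
proof -
  interpret A: skew_reversible S P mu J by (rule K)
  interpret B: skew_reversible S P' mu J by (rule K')
  have "(g_prev (J p) + g (J p)) / 2 = (g_prev p + g p) / 2" if "p \<in> S" for p
    using g[OF that] g[OF A.J_in[OF that]] A.J_J[OF that] by simp
  from poisson_even_inner_mono[where s = "\<lambda>p. (g_prev p + g p) / 2"
      and k = "\<lambda>p. h p + g_prev p / 2" and k' = "\<lambda>p. h' p + g_prev p / 2",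
      OF K K' dom this poisson_shift_half[OF Pg_prev h] poisson_shift_half[OF P'g_prev h']]
  show ?thesis
    using A.poisson_inner_decomp[OF g Pg_prev h] B.poisson_inner_decomp[OF g P'g_prev h'] by simp
qed

section \<open>Lifted chains\<close>

lemma reversible_irreducible_pos:
  fixes T :: "'a::finite \<Rightarrow> 'a \<Rightarrow> real" and pi :: "'a \<Rightarrow> real"
  assumes T_stoch: "stochastic_on UNIV T" and T_irred: "irreducible_on UNIV T"
    and pi_nonneg: "\<And>x. 0 \<le> pi x" and pi_sum: "(\<Sum>x\<in>UNIV. pi x) = 1"
    and reversible: "\<And>x y. pi x * T x y = pi y * T y x"
  shows "0 < pi x"
proof -
  have "(\<Sum>x\<in>UNIV. pi x * T x y) = pi y * (\<Sum>x\<in>UNIV. T y x)" for y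
    by (simp add: sum_distrib_left reversible[of _ y])
  then have "(\<Sum>x\<in>UNIV. pi x * T x y) = pi y" for y
    using T_stoch by (simp add: stochastic_on_def)
  then interpret stationary_markov UNIV T pi
    using T_stoch pi_nonneg pi_sum by unfold_locales simp_all
  show ?thesis using mu_pos[OF T_irred] by simp
qed

lemma reversible_pos_sym:
  fixes T :: "'a \<Rightarrow> 'a \<Rightarrow> real" and pi :: "'a \<Rightarrow> real"
  assumes "\<And>x. 0 < pi x" and "\<And>x y. pi x * T x y = pi y * T y x" and "0 < T x y"
  shows "0 < T y x"
  using assms zero_less_mult_pos[of "pi y" "T y x"] by (metis mult_pos_pos)

lemma balanced_vanishes:
  fixes T :: "'a \<Rightarrow> 'a \<Rightarrow> real"
  assumes bal: "\<And>x y z. y \<noteq> z \<Longrightarrow> T x y * U x y z = T x z * U x z y"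
    and "0 < T x y" and "T x z = 0"
  shows "U x y z = 0"
proof -
  have "y \<noteq> z" using assms(2,3) by auto
  then show ?thesis using bal[of y z x] assms(2,3) by simp
qed

lemma lift_kernel_row_sum:
  fixes T :: "'a::finite \<Rightarrow> 'a \<Rightarrow> real"
  assumes T_nonneg: "\<And>x y. 0 \<le> T x y"
    and U_sum: "\<And>x y. (\<Sum>z\<in>UNIV. U x y z) = 1"
    and bal: "\<And>x y z. y \<noteq> z \<Longrightarrow> T x y * U x y z = T x z * U x z y"
    and "0 < T x1 x0"
  shows "(\<Sum>q\<in>{(x, y). 0 < T x y}. lift_kernel U (x0, x1) q) = 1"
proof -
  have "(\<Sum>q\<in>{(x, y). 0 < T x y}. lift_kernel U (x0, x1) q) = (\<Sum>q\<in>UNIV. lift_kernel U (x0, x1) q)"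
  proof (rule sum.mono_neutral_left)
    show "\<forall>q\<in>UNIV - {(x, y). 0 < T x y}. lift_kernel U (x0, x1) q = 0"
    proof
      fix q assume "q \<in> UNIV - {(x, y). 0 < T x y}"
      moreover obtain y0 y1 where q: "q = (y0, y1)" by fastforce
      ultimately have "T y0 y1 = 0" using T_nonneg[of y0 y1] by (simp add: less_le)
      then show "lift_kernel U (x0, x1) q = 0"
        using balanced_vanishes[where T = T and U = U, OF bal \<open>0 < T x1 x0\<close>]
        by (auto simp: q lift_kernel_def)
    qed
  qed simp_all
  also have "\<dots> = (\<Sum>y0\<in>UNIV. \<Sum>y1\<in>UNIV. lift_kernel U (x0, x1) (y0, y1))"
    by (simp add: sum.cartesian_product UNIV_Times_UNIV[symmetric] del: UNIV_Times_UNIV)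
  also have "\<dots> = (\<Sum>y0\<in>UNIV. if x1 = y0 then (\<Sum>y1\<in>UNIV. U x1 x0 y1) else 0)"
    unfolding lift_kernel_def by (intro sum.cong refl) auto
  finally show ?thesis using U_sum by simp
qed

lemma lift_kernel_skew:
  fixes pi :: "'a \<Rightarrow> real"
  assumes reversible: "\<And>x y. pi x * T x y = pi y * T y x"
    and bal: "\<And>x y z. y \<noteq> z \<Longrightarrow> T x y * U x y z = T x z * U x z y"
  shows "(\<lambda>(x, y). pi x * T x y) p * lift_kernel U p q
    = (\<lambda>(x, y). pi x * T x y) (prod.swap q) * lift_kernel U (prod.swap q) (prod.swap p)"
proof -
  obtain a b c d where pq: "p = (a, b)" "q = (c, d)" by fastforce
  have "pi a * T a b * U b a d = pi d * T d b * U b d a"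
  proof -
    have "pi a * T a b * U b a d = pi b * (T b a * U b a d)" using reversible[of a b] by simp
    also have "\<dots> = pi b * (T b d * U b d a)" by (cases "a = d") (simp_all add: bal)
    also have "\<dots> = pi d * T d b * U b d a" using reversible[of d b] by simp
    finally show ?thesis .
  qed
  then show ?thesis by (simp add: pq lift_kernel_def)
qed

lemma skew_reversible_lift_kernel:
  fixes T :: "'a::finite \<Rightarrow> 'a \<Rightarrow> real" and pi :: "'a \<Rightarrow> real"
  assumes T_stoch: "stochastic_on UNIV T"
    and pi_pos: "\<And>x. 0 < pi x"
    and pi_sum: "(\<Sum>x\<in>UNIV. pi x) = 1"
    and reversible: "\<And>x y. pi x * T x y = pi y * T y x"
    and U_prob: "\<And>x y. (\<forall>z. 0 \<le> U x y z) \<and> (\<Sum>z\<in>UNIV. U x y z) = 1"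
    and bal: "\<And>x y z. y \<noteq> z \<Longrightarrow> T x y * U x y z = T x z * U x z y"
  shows "skew_reversible {(x, y). 0 < T x y} (lift_kernel U) (\<lambda>(x, y). pi x * T x y) prod.swap"
proof
  have T_nonneg: "0 \<le> T x y" and T_sum: "(\<Sum>y\<in>UNIV. T x y) = 1" for x y
    using T_stoch by (simp_all add: stochastic_on_def)
  have swap_pos: "0 < T y x" if "0 < T x y" for x y
    using reversible_pos_sym[OF pi_pos reversible that] .
  have U_sum: "(\<Sum>z\<in>UNIV. U x y z) = 1" for x y
    using U_prob by simp
  have "(\<Sum>q\<in>{(x, y). 0 < T x y}. lift_kernel U p q) = 1" if "p \<in> {(x, y). 0 < T x y}" for p
    using that lift_kernel_row_sum[where T = T and U = U, OF T_nonneg U_sum bal swap_pos]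
    by (cases p) simp
  then show "stochastic_on {(x, y). 0 < T x y} (lift_kernel U)"
    unfolding stochastic_on_def using U_prob by (simp add: lift_kernel_def)
  show "(\<Sum>p\<in>{(x, y). 0 < T x y}. (\<lambda>(x, y). pi x * T x y) p) = 1"
  proof -
    have "(\<Sum>p\<in>{(x, y). 0 < T x y}. (\<lambda>(x, y). pi x * T x y) p)
        = (\<Sum>p\<in>UNIV. (\<lambda>(x, y). pi x * T x y) p)"
      using T_nonneg by (intro sum.mono_neutral_left) (auto simp: less_le)
    also have "\<dots> = (\<Sum>x\<in>UNIV. pi x * (\<Sum>y\<in>UNIV. T x y))"
      by (simp add: sum.cartesian_product UNIV_Times_UNIV[symmetric] sum_distrib_left
          del: UNIV_Times_UNIV)
    finally show ?thesis using T_sum pi_sum by simp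
  qed
  show "prod.swap p \<in> {(x, y). 0 < T x y}" if "p \<in> {(x, y). 0 < T x y}" for p
    using that swap_pos by auto
  show "(\<lambda>(x, y). pi x * T x y) (prod.swap p) = (\<lambda>(x, y). pi x * T x y) p" for p
    using reversible by (simp split: prod.splits)
  show "(\<lambda>(x, y). pi x * T x y) p * lift_kernel U p q
      = (\<lambda>(x, y). pi x * T x y) (prod.swap q) * lift_kernel U (prod.swap q) (prod.swap p)" for p q
    by (rule lift_kernel_skew[OF reversible bal])
qed (use pi_pos T_stoch in \<open>auto simp: stochastic_on_def less_imp_le\<close>)

lemma markov_op_lift_kernel_fst:
  assumes "(\<Sum>q\<in>S. lift_kernel V p q) = 1"
  shows "markov_op S (lift_kernel V) (\<lambda>q. \<phi> (fst q)) p = \<phi> (snd p)"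
proof -
  have "markov_op S (lift_kernel V) (\<lambda>q. \<phi> (fst q)) p = (\<Sum>q\<in>S. lift_kernel V p q * \<phi> (snd p))"
    unfolding markov_op_def by (intro sum.cong refl) (simp add: lift_kernel_def)
  then show ?thesis using assms by (simp flip: sum_distrib_right)
qed

lemma lift_kernel_mono:
  assumes "\<And>x y z. y \<noteq> z \<Longrightarrow> U x y z \<le> U' x y z" and "q \<noteq> prod.swap p"
  shows "lift_kernel U p q \<le> lift_kernel U' p q"
  using assms by (cases p; cases q) (auto simp: lift_kernel_def)

theorem mainTheorem3:
  fixes T :: "'a::finite \<Rightarrow> 'a \<Rightarrow> real"
    and pi :: "'a \<Rightarrow> real"
    and U U' :: "'a \<Rightarrow> 'a \<Rightarrow> 'a \<Rightarrow> real"
    and f :: "'a \<Rightarrow> real"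
  assumes T_stoch: "stochastic_on UNIV T"
    and T_irred: "irreducible_on UNIV T"
    and pi_nonneg: "\<And>x. 0 \<le> pi x"
    and pi_sum: "(\<Sum>x\<in>UNIV. pi x) = 1"
    and reversible: "\<And>x y. pi x * T x y = pi y * T y x"
    and U_prob: "\<And>x y. (\<forall>z. 0 \<le> U x y z) \<and> (\<Sum>z\<in>UNIV. U x y z) = 1"
    and U'_prob: "\<And>x y. (\<forall>z. 0 \<le> U' x y z) \<and> (\<Sum>z\<in>UNIV. U' x y z) = 1"
    and U_bal: "\<And>x y z. y \<noteq> z \<Longrightarrow> T x y * U x y z = T x z * U x z y"
    and U'_bal: "\<And>x y z. y \<noteq> z \<Longrightarrow> T x y * U' x y z = T x z * U' x z y"
    and U'_ge: "\<And>x y z. y \<noteq> z \<Longrightarrow> U' x y z \<ge> U x y z"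
    and irr: "irreducible_on {(x, y). T x y > 0} (lift_kernel U)"
    and irr': "irreducible_on {(x, y). T x y > 0} (lift_kernel U')"
  shows "convergent (\<lambda>n. real n * var_avg {(x, y). T x y > 0} (lift_kernel U')
                              (\<lambda>(x, y). pi x * T x y) (\<lambda>p. f (snd p)) n)
       \<and> convergent (\<lambda>n. real n * var_avg {(x, y). T x y > 0} (lift_kernel U)
                              (\<lambda>(x, y). pi x * T x y) (\<lambda>p. f (snd p)) n)
       \<and> lim (\<lambda>n. real n * var_avg {(x, y). T x y > 0} (lift_kernel U')
                              (\<lambda>(x, y). pi x * T x y) (\<lambda>p. f (snd p)) n)
         \<le> lim (\<lambda>n. real n * var_avg {(x, y). T x y > 0} (lift_kernel U)
                              (\<lambda>(x, y). pi x * T x y) (\<lambda>p. f (snd p)) n)"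
proof -
  let ?S = "{(x, y). T x y > 0}" and ?mu = "\<lambda>(x, y). pi x * T x y"
  have pi_pos: "0 < pi x" for x
    by (rule reversible_irreducible_pos[OF T_stoch T_irred pi_nonneg pi_sum reversible])
  note lift = skew_reversible_lift_kernel[OF T_stoch pi_pos pi_sum reversible]
  have KA: "skew_reversible ?S (lift_kernel U) ?mu prod.swap" by (rule lift[OF U_prob U_bal])
  have KB: "skew_reversible ?S (lift_kernel U') ?mu prod.swap" by (rule lift[OF U'_prob U'_bal])
  interpret A: skew_reversible ?S "lift_kernel U" ?mu prod.swap by (rule KA)
  interpret B: skew_reversible ?S "lift_kernel U'" ?mu prod.swap by (rule KB)
  define m where "m = (\<Sum>p\<in>?S. ?mu p * f (snd p))"
  have centered: "(\<Sum>p\<in>?S. ?mu p * (f (snd p) - m)) = 0"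
    by (simp add: m_def right_diff_distrib sum_subtractf A.mu_sum flip: sum_distrib_right)
  obtain h where h: "\<And>p. p \<in> ?S \<Longrightarrow> h p - markov_op ?S (lift_kernel U) h p = f (snd p) - m"
    using A.poisson_solvable[OF irr centered] by blast
  obtain h' where h': "\<And>p. p \<in> ?S \<Longrightarrow> h' p - markov_op ?S (lift_kernel U') h' p = f (snd p) - m"
    using B.poisson_solvable[OF irr' centered] by blast
  have step: "markov_op ?S (lift_kernel V) (\<lambda>p. f (fst p) - m) p = f (snd p) - m"
    if "(\<Sum>q\<in>?S. lift_kernel V p q) = 1" for V p
    using markov_op_lift_kernel_fst[where \<phi> = "\<lambda>x. f x - m", OF that] by simp
  have "inner_on ?S ?mu (\<lambda>p. f (snd p) - m) h' \<le> inner_on ?S ?mu (\<lambda>p. f (snd p) - m) h"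
    by (rule poisson_inner_mono[OF KA KB lift_kernel_mono[OF U'_ge] _ step[OF A.P_sum]
          step[OF B.P_sum] h h']) simp_all
  then show ?thesis
    using A.asymptotic_variance[OF irr m_def h] B.asymptotic_variance[OF irr' m_def h']
    by (auto intro: convergentI simp: limI)
qed

end
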